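(* Let $\mathcal{A} = \{\pm e_1, \ldots, \pm e_n\}$ be the set of signed canonical unit vectors in $\mathbb{R}^n$, so that the atomic norm $\|\cdot\|_{\mathcal{A}}$ is the $\ell_1$ norm. Suppose $x^\star \in \mathbb{R}^n$ has $k$ nonzeros. For $\gamma \in [0,1)$ define the cone $C_\gamma(x^\star,\mathcal{A}) = \operatorname{cone}(\{z : \|x^\star + z\|_{\mathcal{A}} \leq \|x^\star\|_{\mathcal{A}} + \gamma \|z\|_{\mathcal{A}}\})$ and $\phi_\gamma(x^\star,\mathcal{A}) = \inf\left\{ \frac{\|z\|_2}{\|z\|_{\mathcal{A}}} : z \in C_\gamma(x^\star,\mathcal{A}) \right\}.$ Then $\phi_\gamma(x^\star,\mathcal{A}) \geq \frac{1-\gamma}{2\sqrt{k}}$.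
   Context: Atomic norm of a set of atoms $\mathcal{A}$: $\|x\|_{\mathcal{A}} = \inf\{t>0 : x \in t\,\operatorname{conv}(\mathcal{A})\}$. Here $\operatorname{cone}(S)$ denotes the conic hull of a set $S$. The quantity $\phi_\gamma$ is a generalized weak compatibility constant that controls fast MSE rates for atomic norm soft thresholding $\min_x \tfrac12\|x-y\|_2^2 + \tau\|x\|_{\mathcal{A}}$. *)

theory Defs
  imports "HOL-Analysis.Analysis"
begin

definition atomic_norm :: "('a::real_vector) set \<Rightarrow> 'a \<Rightarrow> real" where
  "atomic_norm A x = Inf {t. t > 0 \<and> x \<in> (\<lambda>v. t *\<^sub>R v) ` (convex hull A)}"

definition l1_atoms :: "(real^'n) set" where
  "l1_atoms = {axis i 1 | i. True} \<union> {- axis i 1 | i. True}"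

definition C_gamma :: "('a::real_vector) set \<Rightarrow> 'a \<Rightarrow> real \<Rightarrow> 'a set" where
  "C_gamma A xs \<gamma> = cone hull {z. atomic_norm A (xs + z) \<le> atomic_norm A xs + \<gamma> * atomic_norm A z}"

text \<open>phi_gamma as an extended real infimum (the ratio is taken over nonzero z; empty inf = +infinity).\<close>
definition phi_gamma :: "('a::real_normed_vector) set \<Rightarrow> 'a \<Rightarrow> real \<Rightarrow> ereal" where
  "phi_gamma A xs \<gamma> = Inf {ereal (norm z / atomic_norm A z) | z. z \<in> C_gamma A xs \<gamma> \<and> z \<noteq> 0}"

end

theory Submission
  imports Defs
begin

text \<open>For the signed unit vectors the atomic norm is the l1 norm. Let S be the support of x.
  If |x + z|_1 \<le> |x|_1 + \<gamma> |z|_1, the reverse triangle inequality on S gives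
  (1 - \<gamma>) |z off S|_1 \<le> (1 + \<gamma>) |z on S|_1. This condition is invariant under nonnegative
  scaling, so it holds on the whole cone C_\<gamma>, and it says (1 - \<gamma>) |z|_1 \<le> 2 |z on S|_1.
  Cauchy-Schwarz bounds |z on S|_1 by \<surd>k |z|_2.\<close>

definition l1_norm_on :: "'n set \<Rightarrow> real^'n \<Rightarrow> real" where
  "l1_norm_on S x = (\<Sum>i\<in>S. \<bar>x $ i\<bar>)"

abbreviation l1_norm :: "real^'n \<Rightarrow> real" where
  "l1_norm \<equiv> l1_norm_on UNIV"

lemma l1_norm_on_nonneg: "l1_norm_on S x \<ge> 0"
  by (simp add: l1_norm_on_def sum_nonneg)

lemma l1_norm_on_scaleR: "l1_norm_on S (c *\<^sub>R x) = \<bar>c\<bar> * l1_norm_on S x"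
  by (simp add: l1_norm_on_def abs_mult sum_distrib_left)

lemma l1_norm_on_triangle: "l1_norm_on S (x + y) \<le> l1_norm_on S x + l1_norm_on S y"
  unfolding l1_norm_on_def sum.distrib[symmetric] by (rule sum_mono) (simp add: abs_triangle_ineq)

lemma l1_norm_on_uminus: "l1_norm_on S (- x) = l1_norm_on S x"
  by (simp add: l1_norm_on_def)

lemma l1_norm_eq_0_iff: "l1_norm x = 0 \<longleftrightarrow> x = 0"
  by (auto simp: l1_norm_on_def sum_nonneg_eq_0_iff vec_eq_iff)

lemma l1_norm_pos: "x \<noteq> 0 \<Longrightarrow> l1_norm x > 0"
  using l1_norm_eq_0_iff l1_norm_on_nonneg by (metis less_eq_real_def)

lemma l1_norm_split: "l1_norm x = l1_norm_on S x + l1_norm_on (- S) x"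
  unfolding l1_norm_on_def Compl_eq_Diff_UNIV
  using sum.subset_diff[of S UNIV "\<lambda>i. \<bar>x $ i\<bar>"] by (simp add: add.commute)

lemma l1_norm_on_le_sqrt_card_mult_norm: "l1_norm_on S x \<le> sqrt (real (card S)) * norm x"
proof -
  have "l1_norm_on S x \<le> L2_set (\<lambda>i. x $ i) S * L2_set (\<lambda>i. 1) S"
    using L2_set_mult_ineq[of "\<lambda>i. x $ i" "\<lambda>i. 1" S] by (simp add: l1_norm_on_def)
  also have "\<dots> = L2_set (\<lambda>i. x $ i) S * sqrt (real (card S))"
    by (simp add: L2_set_constant)
  also have "\<dots> \<le> norm x * sqrt (real (card S))"
  proof (rule mult_right_mono)
    show "L2_set (\<lambda>i. x $ i) S \<le> norm x"
      unfolding norm_vec_def L2_set_def real_norm_def power2_abs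
      by (rule real_sqrt_le_mono, rule sum_mono2) auto
  qed simp
  finally show ?thesis by (simp add: mult.commute)
qed

lemma convex_l1_unit_ball: "convex {x. l1_norm x \<le> 1}"
proof (rule convexI)
  fix x y :: "real^'n" and u v :: real
  assume "x \<in> {x. l1_norm x \<le> 1}" "y \<in> {x. l1_norm x \<le> 1}" "0 \<le> u" "0 \<le> v" "u + v = 1"
  then have "l1_norm (u *\<^sub>R x + v *\<^sub>R y) \<le> u * l1_norm x + v * l1_norm y"
    using l1_norm_on_triangle[of UNIV "u *\<^sub>R x" "v *\<^sub>R y"] by (simp add: l1_norm_on_scaleR)
  also have "\<dots> \<le> u * 1 + v * 1"
    using \<open>x \<in> _\<close> \<open>y \<in> _\<close> \<open>0 \<le> u\<close> \<open>0 \<le> v\<close> by (intro add_mono mult_left_mono) auto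
  finally show "u *\<^sub>R x + v *\<^sub>R y \<in> {x. l1_norm x \<le> 1}"
    using \<open>u + v = 1\<close> by simp
qed

lemma l1_norm_axis: "l1_norm (axis i 1) = 1"
  by (simp add: l1_norm_on_def axis_def sum.delta)

lemma convex_hull_l1_atoms_subset: "convex hull l1_atoms \<subseteq> {x. l1_norm x \<le> 1}"
  by (rule hull_minimal)
     (auto simp: l1_atoms_def l1_norm_axis l1_norm_on_uminus convex_l1_unit_ball)

lemma l1_norm_eq_1_in_convex_hull_l1_atoms:
  assumes "l1_norm x = 1"
  shows "x \<in> convex hull l1_atoms"
proof -
  define s where "s i = (if x $ i \<ge> 0 then axis i 1 else - axis i (1::real))" for i
  have "(\<Sum>i\<in>UNIV. \<bar>x $ i\<bar> *\<^sub>R s i) \<in> convex hull l1_atoms"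
    by (rule convex_sum) (use assms in \<open>auto simp: l1_norm_on_def s_def l1_atoms_def intro!: hull_inc\<close>)
  moreover have "\<bar>x $ i\<bar> *\<^sub>R s i = x $ i *s axis i 1" for i
    by (auto simp: s_def vec_eq_iff axis_def)
  ultimately show ?thesis
    using basis_expansion[of x] by simp
qed

lemma zero_in_convex_hull_l1_atoms: "(0::real^'n) \<in> convex hull l1_atoms"
proof -
  obtain i :: 'n where True by simp
  have "(1/2) *\<^sub>R axis i 1 + (1/2) *\<^sub>R (- axis i 1) \<in> convex hull l1_atoms"
    by (rule convexD[OF convex_convex_hull]) (auto simp: l1_atoms_def intro!: hull_inc)
  then show ?thesis by simp
qed

lemma atomic_norm_l1_atoms: "atomic_norm l1_atoms x = l1_norm x"
proof -
  let ?T = "{t. t > 0 \<and> x \<in> (\<lambda>v. t *\<^sub>R v) ` (convex hull l1_atoms)}"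
  have lower: "l1_norm x \<le> t" if "t \<in> ?T" for t
  proof -
    from that obtain v where "t > 0" "v \<in> convex hull l1_atoms" "x = t *\<^sub>R v" by auto
    with convex_hull_l1_atoms_subset show ?thesis
      by (auto simp: l1_norm_on_scaleR mult_left_le)
  qed
  show ?thesis
  proof (cases "x = 0")
    case True
    then have "?T = {0<..}"
      using zero_in_convex_hull_l1_atoms by (auto intro!: image_eqI[of 0 _ 0])
    with True show ?thesis by (simp add: atomic_norm_def l1_norm_on_def)
  next
    case False
    then have pos: "l1_norm x > 0" by (rule l1_norm_pos)
    then have "(1 / l1_norm x) *\<^sub>R x \<in> convex hull l1_atoms"
      by (intro l1_norm_eq_1_in_convex_hull_l1_atoms) (simp add: l1_norm_on_scaleR)
    with pos have "l1_norm x \<in> ?T"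
      by (auto intro!: image_eqI[of x _ "(1 / l1_norm x) *\<^sub>R x"])
    then show ?thesis
      unfolding atomic_norm_def by (rule cInf_eq_minimum[OF _ lower])
  qed
qed

lemma cone_l1_support_condition: "cone {z. (1 - \<gamma>) * l1_norm_on (- S) z \<le> (1 + \<gamma>) * l1_norm_on S z}"
  unfolding cone_def
  by (auto simp: l1_norm_on_scaleR) (metis mult.left_commute mult_left_mono)

lemma l1_descent_imp_support_condition:
  assumes support: "\<And>i. i \<notin> S \<Longrightarrow> x $ i = 0"
    and descent: "l1_norm (x + z) \<le> l1_norm x + \<gamma> * l1_norm z"
  shows "(1 - \<gamma>) * l1_norm_on (- S) z \<le> (1 + \<gamma>) * l1_norm_on S z"
proof -
  have "l1_norm_on S x \<le> l1_norm_on S (x + z) + l1_norm_on S z"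
    using l1_norm_on_triangle[of S "x + z" "- z"] by (simp add: l1_norm_on_def)
  moreover have "l1_norm_on (- S) (x + z) = l1_norm_on (- S) z" "l1_norm_on (- S) x = 0"
    using support by (auto simp: l1_norm_on_def)
  ultimately show ?thesis
    using descent l1_norm_split[of "x + z" S] l1_norm_split[of x S] l1_norm_split[of z S]
    by (simp add: algebra_simps)
qed

lemma C_gamma_l1_atoms_subset:
  assumes "\<And>i. i \<notin> S \<Longrightarrow> x $ i = 0"
  shows "C_gamma l1_atoms x \<gamma> \<subseteq> {z. (1 - \<gamma>) * l1_norm_on (- S) z \<le> (1 + \<gamma>) * l1_norm_on S z}"
  unfolding C_gamma_def atomic_norm_l1_atoms
  by (rule hull_minimal[where S = cone, OF _ cone_l1_support_condition])
     (use l1_descent_imp_support_condition[OF assms] in blast)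

theorem mainTheorem11:
  fixes xs :: "real^'n" and \<gamma> :: real and k :: nat
  assumes "k = card {i. xs $ i \<noteq> 0}"
    and "0 \<le> \<gamma>" and "\<gamma> < 1"
  shows "phi_gamma l1_atoms xs \<gamma> \<ge> ereal ((1 - \<gamma>) / (2 * sqrt (real k)))"
  unfolding phi_gamma_def
proof (rule Inf_greatest, clarify)
  fix z :: "real^'n"
  assume "z \<in> C_gamma l1_atoms xs \<gamma>" and "z \<noteq> 0"
  define S where "S = {i. xs $ i \<noteq> 0}"
  have "(1 - \<gamma>) * l1_norm_on (- S) z \<le> (1 + \<gamma>) * l1_norm_on S z"
    using C_gamma_l1_atoms_subset[of S xs \<gamma>] \<open>z \<in> C_gamma l1_atoms xs \<gamma>\<close> by (auto simp: S_def)
  then have "(1 - \<gamma>) * l1_norm z \<le> 2 * l1_norm_on S z"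
    using l1_norm_split[of z S] by (simp add: algebra_simps)
  also have "\<dots> \<le> 2 * sqrt (real k) * norm z"
    using l1_norm_on_le_sqrt_card_mult_norm[of S z] assms(1) by (simp add: S_def)
  \<comment> \<open>for \<open>k = 0\<close> the bound is \<open>0\<close>, since division by zero yields zero\<close>
  finally have "(1 - \<gamma>) / (2 * sqrt (real k)) \<le> norm z / l1_norm z"
    using l1_norm_pos[OF \<open>z \<noteq> 0\<close>] by (cases "k = 0") (simp_all add: divide_simps mult.commute)
  then show "ereal ((1 - \<gamma>) / (2 * sqrt (real k))) \<le> ereal (norm z / atomic_norm l1_atoms z)"
    by (simp add: atomic_norm_l1_atoms)
qed

end
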